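(* Let $\beta=(\beta_{ij})_{i,j\ge 0,\ i+j\le 6}$ be a real sequence such that $\mathcal M(3)(\beta)$ is positive semidefinite, $\mathcal M(2)(\beta)$ is positive definite, and $\operatorname{rank}\mathcal M(3)=\operatorname{card}\mathcal V=8$, where $\mathcal V=\{(x_1,y_1),\dots,(x_8,y_8)\}$ is the algebraic variety of $\mathcal M(3)$. Suppose the columns $\mathfrak B_1=\{1,X,Y,X^2,XY,Y^2,X^3,X^2Y\}$ form a basis of the column space of $\mathcal M(3)$. Then $\beta$ has a representing measure if and only if $\mathcal M(3)$ is weakly consistent and, for all $i,j\ge 0$ with $0\le i+j\le 2$, $$\Lambda_\beta\big(x^iy^j(x^4-a_0-a_1x-a_2y-a_3x^2-a_4xy-a_5y^2-a_6x^3-a_7x^2y)\big)=0$$ and $$\Lambda_\beta\big(x^iy^j(x^3y-b_0-b_1x-b_2y-b_3x^2-b_4xy-b_5y^2-b_6x^3-b_7x^2y)\big)=0,$$ where $(a_0,\dots,a_7)^T=W_{\mathfrak B_1}^{-1}(x_1^4,\dots,x_8^4)^T$ and $(b_0,\dots,b_7)^T=W_{\mathfrak B_1}^{-1}(x_1^3y_1,\dots,x_8^3y_8)^T$.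
   Context: The moment matrix $\mathcal M(3)(\beta)$ has rows and columns indexed by $1,X,Y,X^2,XY,Y^2,X^3,X^2Y,XY^2,Y^3$ in this order, with entry $\beta_{i+k,j+l}$ in row $X^iY^j$ and column $X^kY^l$; $\mathcal M(2)(\beta)$ is its principal submatrix indexed by monomials of degree $\le 2$. For $p(x,y)=\sum a_{ij}x^iy^j$ of degree $\le 3$, $p(X,Y)=\sum a_{ij}X^iY^j$ is the corresponding linear combination of columns. The algebraic variety is $\mathcal V=\bigcap\{\mathcal Z(p):\deg p\le 3,\ p(X,Y)=\mathbf 0\}$ with $\mathcal Z(p)$ the real zero set of $p$. The Riesz functional $\Lambda_\beta$ on polynomials of degree $\le 6$ is $\Lambda_\beta(\sum a_{ij}x^iy^j)=\sum a_{ij}\beta_{ij}$. A representing measure is a positive Borel measure $\mu$ on $\mathbb R^2$ with $\beta_{ij}=\int x^iy^j\,d\mu$ for $i+j\le 6$. $\mathcal M(3)$ is weakly consistent if every polynomial $p$ of degree $\le 3$ vanishing on $\mathcal V$ satisfies $p(X,Y)=\mathbf 0$. The generalized Vandermonde matrix $W$ is the $8\times 10$ matrix whose $k$-th row is $(1,x_k,y_k,x_k^2,x_ky_k,y_k^2,x_k^3,x_k^2y_k,x_ky_k^2,y_k^3)$, with columns labeled $1,X,Y,\dots,Y^3$; for a set $\mathcal B$ of column labels, $W_{\mathcal B}$ is the square submatrix of $W$ formed by the columns in $\mathcal B$ (in the listed order). *)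

theory Defs
  imports "HOL-Analysis.Analysis" "Jordan_Normal_Form.DL_Rank" "Jordan_Normal_Form.Gauss_Jordan_Elimination"
begin

text \<open>Monomials of degree at most 3, in the order 1,X,Y,X^2,XY,Y^2,X^3,X^2Y,XY^2,Y^3,
  encoded as exponent pairs (i,j) for x^i y^j.\<close>
definition mons :: "(nat \<times> nat) list" where
  "mons = [(0,0),(1,0),(0,1),(2,0),(1,1),(0,2),(3,0),(2,1),(1,2),(0,3)]"

text \<open>Moment matrix: principal n x n submatrix of M(3)(beta); n = 10 gives M(3), n = 6 gives M(2).\<close>
definition moment_mat :: "(nat \<Rightarrow> nat \<Rightarrow> real) \<Rightarrow> nat \<Rightarrow> real Matrix.mat" where
  "moment_mat \<beta> n = Matrix.mat n n (\<lambda>(r,c).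
     \<beta> (fst (mons!r) + fst (mons!c)) (snd (mons!r) + snd (mons!c)))"

abbreviation M3 :: "(nat \<Rightarrow> nat \<Rightarrow> real) \<Rightarrow> real Matrix.mat" where "M3 \<beta> \<equiv> moment_mat \<beta> 10"
abbreviation M2 :: "(nat \<Rightarrow> nat \<Rightarrow> real) \<Rightarrow> real Matrix.mat" where "M2 \<beta> \<equiv> moment_mat \<beta> 6"

definition psd_mat :: "nat \<Rightarrow> real Matrix.mat \<Rightarrow> bool" where
  "psd_mat n A \<longleftrightarrow> A \<in> carrier_mat n n \<and> A = transpose_mat A \<and>
     (\<forall>v \<in> carrier_vec n. v \<bullet> (A *\<^sub>v v) \<ge> 0)"

definition pd_mat :: "nat \<Rightarrow> real Matrix.mat \<Rightarrow> bool" where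
  "pd_mat n A \<longleftrightarrow> A \<in> carrier_mat n n \<and> A = transpose_mat A \<and>
     (\<forall>v \<in> carrier_vec n. v \<noteq> 0\<^sub>v n \<longrightarrow> v \<bullet> (A *\<^sub>v v) > 0)"

text \<open>A polynomial p of degree at most 3 is given by its coefficient vector a (indexed as mons);
  p(X,Y) is then the column combination M(3) *v a, and peval a x y = p(x,y).\<close>
definition peval :: "real Matrix.vec \<Rightarrow> real \<Rightarrow> real \<Rightarrow> real" where
  "peval a x y = (\<Sum>k<10. a $ k * x ^ fst (mons!k) * y ^ snd (mons!k))"

definition variety :: "(nat \<Rightarrow> nat \<Rightarrow> real) \<Rightarrow> (real \<times> real) set" where
  "variety \<beta> = {(x,y). \<forall>a \<in> carrier_vec 10. M3 \<beta> *\<^sub>v a = 0\<^sub>v 10 \<longrightarrow> peval a x y = 0}"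

definition weakly_consistent :: "(nat \<Rightarrow> nat \<Rightarrow> real) \<Rightarrow> bool" where
  "weakly_consistent \<beta> \<longleftrightarrow> (\<forall>a \<in> carrier_vec 10.
     (\<forall>(x,y) \<in> variety \<beta>. peval a x y = 0) \<longrightarrow> M3 \<beta> *\<^sub>v a = 0\<^sub>v 10)"

text \<open>Riesz functional on polynomials of degree at most 6, given by coefficient functions c i j of x^i y^j.\<close>
definition riesz :: "(nat \<Rightarrow> nat \<Rightarrow> real) \<Rightarrow> (nat \<Rightarrow> nat \<Rightarrow> real) \<Rightarrow> real" where
  "riesz \<beta> c = (\<Sum>i\<le>6. \<Sum>j\<le>6 - i. c i j * \<beta> i j)"

definition mono_times :: "nat \<Rightarrow> nat \<Rightarrow> (nat \<Rightarrow> nat \<Rightarrow> real) \<Rightarrow> (nat \<Rightarrow> nat \<Rightarrow> real)" where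
  "mono_times i j c = (\<lambda>u v. if i \<le> u \<and> j \<le> v then c (u - i) (v - j) else 0)"

text \<open>Coefficients of x^s y^t - sum_{k<8} c_k m_k, with m_k the k-th monomial of B1.\<close>
definition resid_poly :: "nat \<times> nat \<Rightarrow> real Matrix.vec \<Rightarrow> (nat \<Rightarrow> nat \<Rightarrow> real)" where
  "resid_poly st c = (\<lambda>u v. (if (u,v) = st then 1 else 0) - (\<Sum>k<8. if mons!k = (u,v) then c $ k else 0))"

text \<open>Generalized Vandermonde matrix W (8 x 10) and its submatrix W_B1 for
  B1 = {1,X,Y,X^2,XY,Y^2,X^3,X^2Y} (the first 8 columns).\<close>
definition vandermonde :: "(real \<times> real) list \<Rightarrow> real Matrix.mat" where
  "vandermonde pts = Matrix.mat 8 10 (\<lambda>(k,l). fst (pts!k) ^ fst (mons!l) * snd (pts!k) ^ snd (mons!l))"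

definition W_B1 :: "(real \<times> real) list \<Rightarrow> real Matrix.mat" where
  "W_B1 pts = Matrix.mat 8 8 (\<lambda>(k,l). vandermonde pts $$ (k,l))"

definition has_rep_measure :: "(nat \<Rightarrow> nat \<Rightarrow> real) \<Rightarrow> bool" where
  "has_rep_measure \<beta> \<longleftrightarrow> (\<exists>\<mu> :: (real \<times> real) measure. sets \<mu> = sets borel \<and>
     (\<forall>i j. i + j \<le> 6 \<longrightarrow> integrable \<mu> (\<lambda>p. fst p ^ i * snd p ^ j) \<and>
        (\<integral>p. fst p ^ i * snd p ^ j \<partial>\<mu>) = \<beta> i j))"

end

theory Submission
  imports Defs
begin

text \<open>A representing measure integrates \<open>p\<^sup>2\<close> to the quadratic form of \<open>M(3)\<close> at the
  coefficient vector of \<open>p\<close>, so it lives on the common zeros of the kernel polynomials, i.e. on the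
  eight points of \<open>\<V>\<close>: \<open>\<beta>\<close> is then the moment sequence of weights \<open>\<rho>\<close> at these points.

  Conversely, weak consistency makes \<open>W\<^sub>\<B>\<^sub>1\<close> invertible, so there are weights
  \<open>\<rho>\<close> at the points of \<open>\<V>\<close> reproducing \<open>\<beta>\<close> on \<open>\<B>\<^sub>1\<close>. Every monomial of degree
  at most 6 outside \<open>\<B>\<^sub>1\<close> is a shift \<open>x\<^sup>iy\<^sup>j\<close> of one of \<open>x\<^sup>4, x\<^sup>3y, xy\<^sup>2, y\<^sup>3\<close>, and
  both \<open>\<beta>\<close> and the moments of \<open>\<rho>\<close> obey the same recursions for these shifts: the column
  relations of \<open>M(3)\<close> for \<open>xy\<^sup>2, y\<^sup>3\<close>, and for \<open>x\<^sup>4, x\<^sup>3y\<close> their interpolation by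
  \<open>\<B>\<^sub>1\<close> on \<open>\<V>\<close>, which for \<open>\<beta>\<close> are exactly the Riesz conditions. Induction along the
  degree shows that \<open>\<beta>\<close> is the moment sequence of \<open>\<rho>\<close>, and positivity of \<open>M(3)\<close> on the
  Lagrange polynomials of the points makes the weights nonnegative.\<close>

no_notation Finite_Cartesian_Product.vec_nth (infixl "$" 90)

lemma mult_mat_vec_nth_sum:
  assumes "A \<in> carrier_mat n m" "v \<in> carrier_vec m" "r < n"
  shows "(A *\<^sub>v v) $ r = (\<Sum>i<m. A $$ (r,i) * v $ i)"
  using assms unfolding mult_mat_vec_def scalar_prod_def
  by (auto intro!: sum.cong simp: lessThan_atLeast0)

lemma sum_lessThan_10: "(\<Sum>i<10::nat. g i) = (\<Sum>i<8. g i) + g 8 + (g 9 :: 'a::comm_monoid_add)"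
proof -
  have "{..<10::nat} = {..<8} \<union> {8,9}" by auto
  then show ?thesis by (simp add: sum.union_disjoint ac_simps)
qed

lemma mat_inverse_if_injective:
  fixes A :: "'a :: field mat"
  assumes A: "A \<in> carrier_mat n n" and inj: "\<And>v. v \<in> carrier_vec n \<Longrightarrow> A *\<^sub>v v = 0\<^sub>v n \<Longrightarrow> v = 0\<^sub>v n"
  obtains B where "mat_inverse A = Some B" "A * B = 1\<^sub>m n" "B * A = 1\<^sub>m n" "B \<in> carrier_mat n n"
proof -
  have "det A \<noteq> 0"
  proof
    assume "det A = 0"
    then obtain v where "v \<in> carrier_vec n" "v \<noteq> 0\<^sub>v n" "A *\<^sub>v v = 0\<^sub>v n"
      using det_0_iff_vec_prod_zero[OF A] by blast
    with inj show False by blast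
  qed
  then have "A \<in> Units (ring_mat TYPE('a) n undefined)" by (rule det_non_zero_imp_unit[OF A])
  then obtain B where "mat_inverse A = Some B"
    using mat_inverse(1)[OF A, where b = undefined] by (cases "mat_inverse A") auto
  then show ?thesis using that mat_inverse(2)[OF A] by blast
qed

section \<open>Monomials and the recursive structure of \<open>\<B>\<^sub>1\<close>\<close>

lemma length_mons [simp]: "length mons = 10"
  by (simp add: mons_def)

lemma mons_8_9 [simp]: "mons!8 = (1,2)" "mons!9 = (0,3)"
  by (simp_all add: mons_def)

lemma deg_mons: "k < 10 \<Longrightarrow> fst (mons!k) + snd (mons!k) \<le> 3"
  by (simp add: mons_def less_Suc_eq numeral_eq_Suc) (elim disjE; simp)

lemma deg_mons_B1:
  "k < 8 \<Longrightarrow> fst (mons!k) + snd (mons!k) \<le> 3 \<and>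
     (fst (mons!k) + snd (mons!k) = 3 \<longrightarrow> snd (mons!k) \<le> 1)"
  by (simp add: mons_def less_Suc_eq numeral_eq_Suc) (elim disjE; simp)

lemma mons_surj: "i + j \<le> 3 \<Longrightarrow> \<exists>s<10. mons!s = (i,j)"
proof -
  assume "i + j \<le> 3"
  then have "(i,j) \<in> set mons" unfolding mons_def
    by (cases i; cases j) (auto simp: eval_nat_numeral le_Suc_eq)
  then show ?thesis by (auto simp: in_set_conv_nth)
qed

definition B1_generators :: "(nat \<times> nat) set" where
  "B1_generators = {(4,0), (3,1), (1,2), (0,3)}"

lemma monomial_in_B1_or_generated:
  "(\<exists>k<8. mons!k = (u,v)) \<or> (\<exists>(s,t) \<in> B1_generators. s \<le> u \<and> t \<le> v)"
proof (cases "(u,v) \<in> set (take 8 mons)")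
  case True
  then obtain k where "k < 8" "take 8 mons ! k = (u,v)" by (auto simp: in_set_conv_nth)
  then show ?thesis by (metis nth_take)
next
  case False
  then have "(1 \<le> u \<and> 2 \<le> v) \<or> (u = 0 \<and> 3 \<le> v) \<or> (v = 0 \<and> 4 \<le> u) \<or> (v = 1 \<and> 3 \<le> u)"
    unfolding mons_def by simp presburger
  then show ?thesis by (auto simp: B1_generators_def)
qed

text \<open>Shifting a \<open>\<B>\<^sub>1\<close> monomial by \<open>x\<^sup>iy\<^sup>j\<close> lands strictly below the shifted generator in the
  order "total degree first, then degree in \<open>y\<close>".\<close>
lemma B1_shift_below_generator:
  assumes "k < 8" and "(s,t) \<in> B1_generators"
  shows "10 * (fst (mons!k) + i + (snd (mons!k) + j)) + (snd (mons!k) + j)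
           < 10 * (s + i + (t + j)) + (t + j)"
    and "fst (mons!k) + i + (snd (mons!k) + j) \<le> s + i + (t + j)"
  using deg_mons_B1[OF assms(1)] assms(2) by (auto simp: B1_generators_def)

definition B1_recursive :: "(nat \<Rightarrow> nat \<Rightarrow> real) \<Rightarrow> (nat \<times> nat \<Rightarrow> nat \<Rightarrow> real) \<Rightarrow> bool" where
  "B1_recursive m c \<longleftrightarrow> (\<forall>s t i j. (s,t) \<in> B1_generators \<longrightarrow> s + t + i + j \<le> 6 \<longrightarrow>
     m (s + i) (t + j) = (\<Sum>k<8. c (s,t) k * m (fst (mons!k) + i) (snd (mons!k) + j)))"

lemma B1_recursive_diff:
  "B1_recursive m c \<Longrightarrow> B1_recursive m' c \<Longrightarrow> B1_recursive (\<lambda>u v. m u v - m' u v) c"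
  unfolding B1_recursive_def by (simp add: right_diff_distrib sum_subtractf)

lemma B1_recursive_if_eq_low_degree:
  assumes eq: "\<And>u v. u + v \<le> 6 \<Longrightarrow> m u v = m' u v" and rec: "B1_recursive m' c"
  shows "B1_recursive m c"
  unfolding B1_recursive_def
proof (intro allI impI)
  fix s t i j assume st: "(s,t) \<in> B1_generators" "s + t + i + j \<le> 6"
  have "m (s + i) (t + j) = m' (s + i) (t + j)" using st(2) by (intro eq) simp
  also have "\<dots> = (\<Sum>k<8. c (s,t) k * m' (fst (mons!k) + i) (snd (mons!k) + j))"
    using rec st unfolding B1_recursive_def by blast
  also have "\<dots> = (\<Sum>k<8. c (s,t) k * m (fst (mons!k) + i) (snd (mons!k) + j))"
  proof (intro sum.cong refl arg_cong[where f="\<lambda>x. c (s,t) _ * x"] eq[symmetric])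
    fix k assume "k \<in> {..<8::nat}"
    then show "fst (mons!k) + i + (snd (mons!k) + j) \<le> 6"
      using B1_shift_below_generator(2)[OF _ st(1), of k i j] st(2) by simp
  qed
  finally show "m (s + i) (t + j) = (\<Sum>k<8. c (s,t) k * m (fst (mons!k) + i) (snd (mons!k) + j))" .
qed

lemma B1_recursive_vanishing:
  assumes rec: "B1_recursive w c"
    and B1: "\<And>k. k < 8 \<Longrightarrow> w (fst (mons!k)) (snd (mons!k)) = 0"
  shows "u + v \<le> 6 \<Longrightarrow> w u v = 0"
proof (induction "10 * (u + v) + v" arbitrary: u v rule: less_induct)
  case (less u v)
  consider (base) k where "k < 8" "mons!k = (u,v)"
    | (gen) s t where "(s,t) \<in> B1_generators" "s \<le> u" "t \<le> v"
    using monomial_in_B1_or_generated[of u v] by blast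
  then show ?case
  proof cases
    case base
    then show ?thesis using B1[of k] by simp
  next
    case gen
    define i where "i = u - s"
    define j where "j = v - t"
    have uv: "u = s + i" "v = t + j" using gen by (simp_all add: i_def j_def)
    have "w u v = (\<Sum>k<8. c (s,t) k * w (fst (mons!k) + i) (snd (mons!k) + j))"
      using rec gen(1) less.prems unfolding B1_recursive_def uv by (simp add: add.assoc)
    also have "\<dots> = 0"
    proof (intro sum.neutral ballI)
      fix k assume "k \<in> {..<8::nat}"
      then have "w (fst (mons!k) + i) (snd (mons!k) + j) = 0"
        using less.hyps B1_shift_below_generator[OF _ gen(1), of k i j] less.prems
        unfolding uv by simp
      then show "c (s,t) k * w (fst (mons!k) + i) (snd (mons!k) + j) = 0" by simp
    qed
    finally show ?thesis .
  qed
qed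

section \<open>The moment matrix and the Riesz functional\<close>

lemma moment_mat_carrier: "moment_mat \<beta> n \<in> carrier_mat n n"
  by (simp add: moment_mat_def)

lemma dim_moment_mat [simp]: "dim_row (moment_mat \<beta> n) = n" "dim_col (moment_mat \<beta> n) = n"
  by (simp_all add: moment_mat_def)

lemma M3_mult_vec_nth:
  assumes "a \<in> carrier_vec 10" "s < 10"
  shows "(M3 \<beta> *\<^sub>v a) $ s =
    (\<Sum>c<10. a $ c * \<beta> (fst (mons!c) + fst (mons!s)) (snd (mons!c) + snd (mons!s)))"
  using mult_mat_vec_nth_sum[OF moment_mat_carrier assms] assms(2)
  by (auto intro!: sum.cong simp: moment_mat_def ac_simps)

lemma kernel_shift_relation:
  assumes "a \<in> carrier_vec 10" "M3 \<beta> *\<^sub>v a = 0\<^sub>v 10" "i + j \<le> 3"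
  shows "(\<Sum>r<10. a $ r * \<beta> (fst (mons!r) + i) (snd (mons!r) + j)) = 0"
proof -
  obtain s where s: "s < 10" "mons!s = (i,j)" using mons_surj[OF assms(3)] by blast
  have "(M3 \<beta> *\<^sub>v a) $ s = 0" using assms(2) s(1) by simp
  then show ?thesis using M3_mult_vec_nth[OF assms(1) s(1)] s(2) by simp
qed

lemma tail_relation:
  fixes k :: "real vec" and m :: "nat \<Rightarrow> nat \<Rightarrow> real"
  assumes t: "t \<in> {8,9}"
    and tail: "k $ 8 = (if t = 8 then 1 else 0)" "k $ 9 = (if t = 9 then 1 else 0)"
    and rel: "(\<Sum>r<10. k $ r * m (fst (mons!r) + i) (snd (mons!r) + j)) = 0"
  shows "m (fst (mons!t) + i) (snd (mons!t) + j) =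
    (\<Sum>r<8. - k $ r * m (fst (mons!r) + i) (snd (mons!r) + j))"
proof -
  have "(\<Sum>r<10. k $ r * m (fst (mons!r) + i) (snd (mons!r) + j)) =
      (\<Sum>r<8. k $ r * m (fst (mons!r) + i) (snd (mons!r) + j)) + m (fst (mons!t) + i) (snd (mons!t) + j)"
    using t tail unfolding sum_lessThan_10 by auto
  then show ?thesis using rel by (simp add: sum_negf)
qed

lemma riesz_diff: "riesz \<beta> (\<lambda>u v. f u v - g u v) = riesz \<beta> f - riesz \<beta> g"
  unfolding riesz_def by (simp add: left_diff_distrib sum_subtractf)

lemma riesz_scale: "riesz \<beta> (\<lambda>u v. c * f u v) = c * riesz \<beta> f"
  unfolding riesz_def sum_distrib_left by (simp add: ac_simps)

lemma riesz_sum: "riesz \<beta> (\<lambda>u v. \<Sum>k\<in>K. h k u v) = (\<Sum>k\<in>K. riesz \<beta> (h k))"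
proof -
  have "riesz \<beta> (\<lambda>u v. \<Sum>k\<in>K. h k u v) = (\<Sum>i\<le>6. \<Sum>j\<le>6 - i. \<Sum>k\<in>K. h k i j * \<beta> i j)"
    unfolding riesz_def sum_distrib_right by simp
  also have "\<dots> = (\<Sum>k\<in>K. \<Sum>i\<le>6. \<Sum>j\<le>6 - i. h k i j * \<beta> i j)"
    by (subst sum.swap) (simp add: sum.swap[of _ K])
  finally show ?thesis unfolding riesz_def .
qed

definition mono_coeffs :: "nat \<times> nat \<Rightarrow> nat \<Rightarrow> nat \<Rightarrow> real" where
  "mono_coeffs P u v = (if (u,v) = P then 1 else 0)"

lemma riesz_mono_coeffs: "p + q \<le> 6 \<Longrightarrow> riesz \<beta> (mono_coeffs (p,q)) = \<beta> p q"
proof -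
  assume deg: "p + q \<le> 6"
  have row: "(\<Sum>j\<le>6 - i. mono_coeffs (p,q) i j * \<beta> i j) =
      (if i = p then (if q \<le> 6 - i then \<beta> p q else 0) else 0)" for i
    by (cases "i = p") (simp_all add: mono_coeffs_def mult_if_delta)
  show ?thesis unfolding riesz_def row using deg by simp
qed

lemma mono_times_resid_poly:
  "mono_times i j (resid_poly (s,t) a) = (\<lambda>u v. mono_coeffs (s + i, t + j) u v -
     (\<Sum>k<8. a $ k * mono_coeffs (fst (mons!k) + i, snd (mons!k) + j) u v))"
proof (intro ext)
  fix u v
  show "mono_times i j (resid_poly (s,t) a) u v = mono_coeffs (s + i, t + j) u v -
      (\<Sum>k<8. a $ k * mono_coeffs (fst (mons!k) + i, snd (mons!k) + j) u v)"
  proof (cases "i \<le> u \<and> j \<le> v")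
    case True
    have shift: "(mons!k = (u - i, v - j)) = ((u,v) = (fst (mons!k) + i, snd (mons!k) + j))" for k
      using True by (cases "mons!k") auto
    show ?thesis using True unfolding mono_times_def resid_poly_def mono_coeffs_def
      by (simp add: shift[symmetric] if_distrib[of "\<lambda>x. _ * x"] cong: if_cong)
        (auto intro!: sum.cong)
  next
    case False
    then show ?thesis unfolding mono_times_def mono_coeffs_def by auto
  qed
qed

lemma riesz_mono_times_resid:
  assumes "s + t + i + j \<le> 6" "i + j \<le> 3"
  shows "riesz \<beta> (mono_times i j (resid_poly (s,t) a)) =
    \<beta> (s + i) (t + j) - (\<Sum>k<8. a $ k * \<beta> (fst (mons!k) + i) (snd (mons!k) + j))"
proof -
  have "riesz \<beta> (mono_coeffs (fst (mons!k) + i, snd (mons!k) + j)) =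
      \<beta> (fst (mons!k) + i) (snd (mons!k) + j)" if "k < 8" for k
    using deg_mons_B1[OF that] assms(2) by (intro riesz_mono_coeffs) simp
  then show ?thesis using assms(1)
    by (simp add: mono_times_resid_poly riesz_diff riesz_sum riesz_scale riesz_mono_coeffs)
qed

section \<open>Finitely atomic moment sequences\<close>

definition atomic_seq :: "(real \<times> real) list \<Rightarrow> (nat \<Rightarrow> real) \<Rightarrow> nat \<Rightarrow> nat \<Rightarrow> real" where
  "atomic_seq pts \<rho> u v = (\<Sum>l<length pts. \<rho> l * fst (pts!l) ^ u * snd (pts!l) ^ v)"

definition atomic_moments :: "(nat \<Rightarrow> nat \<Rightarrow> real) \<Rightarrow> (real \<times> real) list \<Rightarrow> (nat \<Rightarrow> real) \<Rightarrow> bool" where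
  "atomic_moments \<beta> pts \<rho> \<longleftrightarrow> (\<forall>u v. u + v \<le> 6 \<longrightarrow> \<beta> u v = atomic_seq pts \<rho> u v)"

lemma sum_atomic_seq_shift:
  "(\<Sum>r\<in>R. c r * atomic_seq pts \<rho> (fst (e r) + i) (snd (e r) + j)) =
   (\<Sum>l<length pts. \<rho> l * fst (pts!l) ^ i * snd (pts!l) ^ j *
      (\<Sum>r\<in>R. c r * fst (pts!l) ^ fst (e r) * snd (pts!l) ^ snd (e r)))"
  unfolding atomic_seq_def sum_distrib_left
  by (subst sum.swap) (simp add: power_add ac_simps)

lemma atomic_moments_M3_mult_vec:
  assumes at: "atomic_moments \<beta> pts \<rho>" and a: "a \<in> carrier_vec 10" and s: "s < 10"
  shows "(M3 \<beta> *\<^sub>v a) $ s = (\<Sum>l<length pts. \<rho> l * fst (pts!l) ^ fst (mons!s) *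
      snd (pts!l) ^ snd (mons!s) * peval a (fst (pts!l)) (snd (pts!l)))"
proof -
  have "(M3 \<beta> *\<^sub>v a) $ s = (\<Sum>c<10. a $ c *
      atomic_seq pts \<rho> (fst (mons!c) + fst (mons!s)) (snd (mons!c) + snd (mons!s)))"
    unfolding M3_mult_vec_nth[OF a s]
  proof (intro sum.cong refl)
    fix c assume "c \<in> {..<10::nat}"
    then have "fst (mons!c) + fst (mons!s) + (snd (mons!c) + snd (mons!s)) \<le> 6"
      using deg_mons[of c] deg_mons[OF s] by simp
    then show "a $ c * \<beta> (fst (mons!c) + fst (mons!s)) (snd (mons!c) + snd (mons!s)) =
        a $ c * atomic_seq pts \<rho> (fst (mons!c) + fst (mons!s)) (snd (mons!c) + snd (mons!s))"
      using at unfolding atomic_moments_def by simp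
  qed
  also have "\<dots> = (\<Sum>l<length pts. \<rho> l * fst (pts!l) ^ fst (mons!s) *
      snd (pts!l) ^ snd (mons!s) * peval a (fst (pts!l)) (snd (pts!l)))"
    unfolding peval_def by (rule sum_atomic_seq_shift)
  finally show ?thesis .
qed

lemma atomic_moments_quadratic_form:
  assumes at: "atomic_moments \<beta> pts \<rho>" and a: "a \<in> carrier_vec 10"
  shows "a \<bullet> (M3 \<beta> *\<^sub>v a) = (\<Sum>l<length pts. \<rho> l * (peval a (fst (pts!l)) (snd (pts!l)))\<^sup>2)"
proof -
  let ?x = "\<lambda>l. fst (pts!l)" and ?y = "\<lambda>l. snd (pts!l)"
  have "a \<bullet> (M3 \<beta> *\<^sub>v a) = (\<Sum>s<10. a $ s * (M3 \<beta> *\<^sub>v a) $ s)"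
    using a by (simp add: scalar_prod_def lessThan_atLeast0 del: index_mult_mat_vec)
  also have "\<dots> = (\<Sum>s<10. \<Sum>l<length pts. a $ s *
      (\<rho> l * ?x l ^ fst (mons!s) * ?y l ^ snd (mons!s) * peval a (?x l) (?y l)))"
    by (intro sum.cong refl)
      (simp add: atomic_moments_M3_mult_vec[OF at a] sum_distrib_left del: index_mult_mat_vec)
  also have "\<dots> = (\<Sum>l<length pts. \<rho> l * peval a (?x l) (?y l) *
      (\<Sum>s<10. a $ s * ?x l ^ fst (mons!s) * ?y l ^ snd (mons!s)))"
    unfolding sum_distrib_left by (subst sum.swap) (simp add: ac_simps)
  also have "\<dots> = (\<Sum>l<length pts. \<rho> l * (peval a (?x l) (?y l))\<^sup>2)"
    unfolding peval_def[symmetric] by (simp add: power2_eq_square mult.assoc)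
  finally show ?thesis .
qed

lemma atomic_weight_nonneg:
  assumes psd: "psd_mat 10 (M3 \<beta>)" and at: "atomic_moments \<beta> pts \<rho>"
    and a: "a \<in> carrier_vec 10" and l: "l < length pts"
    and lagrange: "\<And>m. m < length pts \<Longrightarrow>
      peval a (fst (pts!m)) (snd (pts!m)) = (if m = l then 1 else 0)"
  shows "\<rho> l \<ge> 0"
proof -
  have "0 \<le> a \<bullet> (M3 \<beta> *\<^sub>v a)" using psd a unfolding psd_mat_def by blast
  also have "\<dots> = (\<Sum>m<length pts. \<rho> m * (peval a (fst (pts!m)) (snd (pts!m)))\<^sup>2)"
    by (rule atomic_moments_quadratic_form[OF at a])
  also have "\<dots> = (\<Sum>m<length pts. if m = l then \<rho> l else 0)"
    by (intro sum.cong refl) (simp add: lagrange)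
  also have "\<dots> = \<rho> l" using l by simp
  finally show ?thesis .
qed

lemma atomic_moments_weakly_consistent:
  assumes at: "atomic_moments \<beta> pts \<rho>" and pts: "set pts \<subseteq> variety \<beta>"
  shows "weakly_consistent \<beta>"
  unfolding weakly_consistent_def
proof (intro ballI impI)
  fix a :: "real vec"
  assume a: "a \<in> carrier_vec 10" and van: "\<forall>(x,y) \<in> variety \<beta>. peval a x y = 0"
  have "peval a (fst (pts!l)) (snd (pts!l)) = 0" if "l < length pts" for l
    using van pts nth_mem[OF that] by (auto simp: case_prod_beta)
  then show "M3 \<beta> *\<^sub>v a = 0\<^sub>v 10"
    by (intro eq_vecI) (simp_all add: atomic_moments_M3_mult_vec[OF at a] del: index_mult_mat_vec)
qed

section \<open>Representing measures\<close>

definition represents :: "(real \<times> real) measure \<Rightarrow> (nat \<Rightarrow> nat \<Rightarrow> real) \<Rightarrow> bool" where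
  "represents \<mu> \<beta> \<longleftrightarrow> sets \<mu> = sets borel \<and> (\<forall>i j. i + j \<le> 6 \<longrightarrow>
     integrable \<mu> (\<lambda>p. fst p ^ i * snd p ^ j) \<and> (\<integral>p. fst p ^ i * snd p ^ j \<partial>\<mu>) = \<beta> i j)"

lemma has_rep_measure_iff_represents: "has_rep_measure \<beta> \<longleftrightarrow> (\<exists>\<mu>. represents \<mu> \<beta>)"
  unfolding has_rep_measure_def represents_def by blast

lemma borel_measurable_monomial [measurable]:
  "(\<lambda>p::real \<times> real. fst p ^ i * snd p ^ j) \<in> borel_measurable borel"
  by (rule borel_measurable_continuous_onI) (intro continuous_intros)

lemma sum_set_distinct_nth:
  "distinct xs \<Longrightarrow> (\<Sum>x\<in>set xs. f x) = (\<Sum>l<length xs. f (xs!l))"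
  using sum.reindex_bij_betw[OF bij_betw_nth[OF _ refl refl], of xs f] by simp

lemma has_rep_measure_if_atomic:
  assumes D: "distinct pts" and nonneg: "\<And>l. l < length pts \<Longrightarrow> \<rho> l \<ge> 0"
    and at: "atomic_moments \<beta> pts \<rho>"
  shows "has_rep_measure \<beta>"
proof -
  define g where "g p = (\<Sum>l<length pts. \<rho> l * indicator {pts!l} p)" for p :: "real \<times> real"
  have g_nth: "g (pts!l) = \<rho> l" if "l < length pts" for l
  proof -
    have "g (pts!l) = (\<Sum>m<length pts. if m = l then \<rho> m else 0)"
      unfolding g_def using D that by (intro sum.cong) (auto simp: nth_eq_iff_index_eq)
    then show ?thesis using that by simp
  qed
  have g_nonneg: "g p \<ge> 0" for p unfolding g_def using nonneg by (intro sum_nonneg) auto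
  define \<nu> where "\<nu> = density (count_space (set pts)) (\<lambda>p. ennreal (g p))"
  define \<mu> where "\<mu> = distr \<nu> borel (\<lambda>p. p)"
  have id_meas: "(\<lambda>p. p) \<in> measurable \<nu> borel" by (simp add: \<nu>_def)
  have "integrable \<mu> (\<lambda>p. fst p ^ i * snd p ^ j) \<and>
      (\<integral>p. fst p ^ i * snd p ^ j \<partial>\<mu>) = atomic_seq pts \<rho> i j" for i j
  proof
    have "integrable \<nu> (\<lambda>p. fst p ^ i * snd p ^ j)"
      unfolding \<nu>_def by (subst integrable_density) (auto simp: g_nonneg integrable_count_space)
    then show "integrable \<mu> (\<lambda>p. fst p ^ i * snd p ^ j)"
      unfolding \<mu>_def integrable_distr_eq[OF id_meas borel_measurable_monomial] .
    have "(\<integral>p. fst p ^ i * snd p ^ j \<partial>\<mu>) = (\<integral>p. fst p ^ i * snd p ^ j \<partial>\<nu>)"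
      unfolding \<mu>_def by (rule integral_distr[OF id_meas borel_measurable_monomial])
    also have "\<dots> = (\<Sum>p\<in>set pts. g p * (fst p ^ i * snd p ^ j))"
      unfolding \<nu>_def
      by (subst integral_density) (auto simp: g_nonneg lebesgue_integral_count_space_finite)
    also have "\<dots> = atomic_seq pts \<rho> i j"
      unfolding sum_set_distinct_nth[OF D] atomic_seq_def by (intro sum.cong) (simp_all add: g_nth)
    finally show "(\<integral>p. fst p ^ i * snd p ^ j \<partial>\<mu>) = atomic_seq pts \<rho> i j" .
  qed
  then have "represents \<mu> \<beta>"
    using at unfolding represents_def atomic_moments_def by (simp add: \<mu>_def)
  then show ?thesis unfolding has_rep_measure_iff_represents by blast
qed

lemma represents_integral_shifted_peval:
  assumes rep: "represents \<mu> \<beta>" and a: "a \<in> carrier_vec 10" and s: "s < 10"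
  shows "integrable \<mu> (\<lambda>p. fst p ^ fst (mons!s) * snd p ^ snd (mons!s) * peval a (fst p) (snd p))"
    and "(\<integral>p. fst p ^ fst (mons!s) * snd p ^ snd (mons!s) * peval a (fst p) (snd p) \<partial>\<mu>) =
      (M3 \<beta> *\<^sub>v a) $ s"
proof -
  let ?u = "\<lambda>c. fst (mons!c) + fst (mons!s)" and ?v = "\<lambda>c. snd (mons!c) + snd (mons!s)"
  have expand: "(\<lambda>p. fst p ^ fst (mons!s) * snd p ^ snd (mons!s) * peval a (fst p) (snd p)) =
      (\<lambda>p. \<Sum>c<10. a $ c * (fst p ^ ?u c * snd p ^ ?v c))"
    unfolding peval_def sum_distrib_left by (intro ext sum.cong refl) (simp add: power_add ac_simps)
  have mom: "integrable \<mu> (\<lambda>p. fst p ^ ?u c * snd p ^ ?v c) \<and>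
      (\<integral>p. fst p ^ ?u c * snd p ^ ?v c \<partial>\<mu>) = \<beta> (?u c) (?v c)" if "c < 10" for c
    using rep deg_mons[OF that] deg_mons[OF s] unfolding represents_def by simp
  show "integrable \<mu> (\<lambda>p. fst p ^ fst (mons!s) * snd p ^ snd (mons!s) * peval a (fst p) (snd p))"
    unfolding expand using mom by (auto intro!: Bochner_Integration.integrable_sum integrable_mult_right)
  show "(\<integral>p. fst p ^ fst (mons!s) * snd p ^ snd (mons!s) * peval a (fst p) (snd p) \<partial>\<mu>) =
      (M3 \<beta> *\<^sub>v a) $ s"
    unfolding expand M3_mult_vec_nth[OF a s] using mom
    by (subst Bochner_Integration.integral_sum) (auto intro!: sum.cong integrable_mult_right)
qed

lemma represents_integral_peval_square:
  assumes rep: "represents \<mu> \<beta>" and a: "a \<in> carrier_vec 10"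
  shows "integrable \<mu> (\<lambda>p. (peval a (fst p) (snd p))\<^sup>2)"
    and "(\<integral>p. (peval a (fst p) (snd p))\<^sup>2 \<partial>\<mu>) = a \<bullet> (M3 \<beta> *\<^sub>v a)"
proof -
  have sq: "(peval a x y)\<^sup>2 = (\<Sum>s<10. a $ s * (x ^ fst (mons!s) * y ^ snd (mons!s) * peval a x y))"
    for x y
  proof -
    have "(peval a x y)\<^sup>2 = (\<Sum>s<10. a $ s * x ^ fst (mons!s) * y ^ snd (mons!s)) * peval a x y"
      by (simp add: power2_eq_square peval_def[of a x y, symmetric])
    then show ?thesis by (simp add: sum_distrib_left ac_simps)
  qed
  show "integrable \<mu> (\<lambda>p. (peval a (fst p) (snd p))\<^sup>2)"
    unfolding sq using represents_integral_shifted_peval(1)[OF rep a]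
    by (auto intro!: Bochner_Integration.integrable_sum integrable_mult_right)
  have "(\<integral>p. (peval a (fst p) (snd p))\<^sup>2 \<partial>\<mu>) = (\<Sum>s<10. a $ s * (M3 \<beta> *\<^sub>v a) $ s)"
    unfolding sq using represents_integral_shifted_peval[OF rep a]
    by (subst Bochner_Integration.integral_sum) (auto intro!: sum.cong integrable_mult_right)
  also have "\<dots> = a \<bullet> (M3 \<beta> *\<^sub>v a)"
    using a by (simp add: scalar_prod_def lessThan_atLeast0 del: index_mult_mat_vec)
  finally show "(\<integral>p. (peval a (fst p) (snd p))\<^sup>2 \<partial>\<mu>) = a \<bullet> (M3 \<beta> *\<^sub>v a)" .
qed

lemma represents_AE_kernel:
  assumes rep: "represents \<mu> \<beta>" and a: "a \<in> carrier_vec 10" "M3 \<beta> *\<^sub>v a = 0\<^sub>v 10"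
  shows "AE p in \<mu>. peval a (fst p) (snd p) = 0"
proof -
  have "(\<integral>p. (peval a (fst p) (snd p))\<^sup>2 \<partial>\<mu>) = 0"
    using represents_integral_peval_square(2)[OF rep a(1)] a by simp
  then have "AE p in \<mu>. (peval a (fst p) (snd p))\<^sup>2 = 0"
    using integral_nonneg_eq_0_iff_AE[OF represents_integral_peval_square(1)[OF rep a(1)]] by simp
  then show ?thesis by simp
qed

lemma represents_atomic_if_AE_points:
  assumes rep: "represents \<mu> \<beta>" and AE: "AE p in \<mu>. p \<in> set pts" and D: "distinct pts"
  shows "atomic_moments \<beta> pts (\<lambda>l. measure \<mu> {pts!l})"
  unfolding atomic_moments_def
proof (intro allI impI)
  fix u v :: nat assume uv: "u + v \<le> 6"
  have S: "sets \<mu> = sets borel" using rep by (simp add: represents_def)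
  have "integrable \<mu> (\<lambda>p. 1::real)"
    using rep[unfolded represents_def, THEN conjunct2, rule_format, of 0 0] by simp
  then have "(\<integral>\<^sup>+ p. ennreal (norm (1::real)) \<partial>\<mu>) < \<infinity>" by (simp add: integrable_iff_bounded)
  then interpret finite_measure \<mu> by (intro finite_measureI) simp
  have sing: "{p} \<in> sets \<mu>" for p :: "real \<times> real" using S by simp
  let ?f = "\<lambda>p::real \<times> real. fst p ^ u * snd p ^ v"
  let ?g = "\<lambda>p. \<Sum>l<length pts. ?f (pts!l) * indicator {pts!l} p"
  have f_meas: "?f \<in> borel_measurable \<mu>"
    using measurable_cong_sets[OF S refl] borel_measurable_monomial by blast
  have g_meas: "?g \<in> borel_measurable \<mu>"
    by (intro borel_measurable_sum borel_measurable_times borel_measurable_const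
        borel_measurable_indicator sing)
  have fg: "?f p = ?g p" if p: "p \<in> set pts" for p
  proof -
    obtain l where l: "l < length pts" "p = pts!l" using p by (metis in_set_conv_nth)
    have "?g p = (\<Sum>m<length pts. if m = l then ?f (pts!l) else 0)"
      using D l by (intro sum.cong) (auto simp: nth_eq_iff_index_eq)
    then show ?thesis using l by simp
  qed
  have "\<beta> u v = integral\<^sup>L \<mu> ?f" using rep uv by (simp add: represents_def)
  also have "\<dots> = integral\<^sup>L \<mu> ?g"
  proof (rule integral_cong_AE[OF f_meas g_meas])
    show "AE p in \<mu>. ?f p = ?g p" using AE by eventually_elim (rule fg)
  qed
  also have "\<dots> = (\<Sum>l<length pts. ?f (pts!l) * measure \<mu> {pts!l})"
    using sing by (subst Bochner_Integration.integral_sum)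
      (auto intro!: integrable_mult_right integrable_real_indicator simp: emeasure_eq_measure)
  finally show "\<beta> u v = atomic_seq pts (\<lambda>l. measure \<mu> {pts!l}) u v"
    unfolding atomic_seq_def by (simp add: ac_simps)
qed

section \<open>Consequences of \<open>\<B>\<^sub>1\<close> being a column basis\<close>

definition B1_cols :: "(nat \<Rightarrow> nat \<Rightarrow> real) \<Rightarrow> real vec list" where
  "B1_cols \<beta> = map (col (M3 \<beta>)) [0..<8]"

locale B1_basis =
  fixes \<beta> :: "nat \<Rightarrow> nat \<Rightarrow> real"
  assumes distinct_B1_cols: "distinct (B1_cols \<beta>)"
    and lin_indpt_B1_cols: "module.lin_indpt class_ring (module_vec TYPE(real) 10) (set (B1_cols \<beta>))"
    and span_B1_cols: "module.span class_ring (module_vec TYPE(real) 10) (set (B1_cols \<beta>)) =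
      vec_space.col_space 10 (M3 \<beta>)"
begin

lemma B1_cols_carrier: "set (B1_cols \<beta>) \<subseteq> carrier_vec 10"
  unfolding B1_cols_def by (auto simp: col_def moment_mat_def)

lemma lincomb_B1_cols_nth:
  assumes "r < 10"
  shows "module.lincomb (module_vec TYPE(real) 10) f (set (B1_cols \<beta>)) $ r =
    (\<Sum>i<8. M3 \<beta> $$ (r,i) * f (B1_cols \<beta> ! i))"
proof -
  interpret vec_space "TYPE(real)" 10 .
  have "lincomb f (set (B1_cols \<beta>)) = lincomb_list (\<lambda>i. f (B1_cols \<beta> ! i)) (B1_cols \<beta>)"
    by (rule lincomb_as_lincomb_list_distinct[OF B1_cols_carrier distinct_B1_cols])
  also have "\<dots> = mat_of_cols 10 (B1_cols \<beta>) *\<^sub>v vec 8 (\<lambda>i. f (B1_cols \<beta> ! i))"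
    by (rule trans[OF lincomb_list_as_mat_mult]) (auto simp: B1_cols_def moment_mat_def)
  also have "\<dots> $ r = (\<Sum>i<8. M3 \<beta> $$ (r,i) * f (B1_cols \<beta> ! i))"
    using assms unfolding mat_of_cols_def mult_mat_vec_def scalar_prod_def
    by (auto intro!: sum.cong simp: lessThan_atLeast0 B1_cols_def moment_mat_def)
  finally show ?thesis .
qed

lemma kernel_vec_eq_0_if_tail_0:
  assumes c: "c \<in> carrier_vec 10" "M3 \<beta> *\<^sub>v c = 0\<^sub>v 10" and tail: "c $ 8 = 0" "c $ 9 = 0"
  shows "c = 0\<^sub>v 10"
proof -
  interpret vec_space "TYPE(real)" 10 .
  define f where "f v = c $ (inv_into {..<8} ((!) (B1_cols \<beta>)) v)" for v
  have "inj_on ((!) (B1_cols \<beta>)) {..<8}"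
    by (intro inj_on_nth[OF distinct_B1_cols]) (simp add: B1_cols_def)
  then have f_nth: "f (B1_cols \<beta> ! i) = c $ i" if "i < 8" for i
    using that by (simp add: f_def)
  have "lincomb f (set (B1_cols \<beta>)) = 0\<^sub>v 10"
  proof (rule eq_vecI)
    fix r assume "r < dim_vec (0\<^sub>v 10 :: real vec)"
    then have r: "r < 10" by simp
    have "lincomb f (set (B1_cols \<beta>)) $ r = (\<Sum>i<8. M3 \<beta> $$ (r,i) * c $ i)"
      using lincomb_B1_cols_nth[OF r] f_nth by simp
    also have "\<dots> = (M3 \<beta> *\<^sub>v c) $ r"
      using mult_mat_vec_nth_sum[OF moment_mat_carrier c(1) r] tail by (simp add: sum_lessThan_10)
    finally show "lincomb f (set (B1_cols \<beta>)) $ r = 0\<^sub>v 10 $ r" using c(2) r by simp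
  qed (use B1_cols_carrier in auto)
  then have "f \<in> set (B1_cols \<beta>) \<rightarrow> {0}"
    using not_lindepD[OF lin_indpt_B1_cols finite_set subset_refl] by simp
  then have "c $ i = 0" if "i < 8" for i
    using that f_nth[OF that] by (force simp: B1_cols_def)
  then show ?thesis
    using c(1) tail by (intro eq_vecI) (auto simp: less_Suc_eq numeral_eq_Suc)
qed

lemma kernel_vec_with_tail:
  assumes t: "t \<in> {8,9}"
  shows "\<exists>k \<in> carrier_vec 10. M3 \<beta> *\<^sub>v k = 0\<^sub>v 10 \<and> (\<forall>s\<in>{8,9}. k $ s = (if s = t then 1 else 0))"
proof -
  interpret vec_space "TYPE(real)" 10 .
  have "col (M3 \<beta>) t \<in> col_space (M3 \<beta>)"
    unfolding col_space_def using t
    by (intro span_mem) (auto simp: cols_def col_def moment_mat_def)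
  then obtain a where a: "lincomb a (set (B1_cols \<beta>)) = col (M3 \<beta>) t"
    using finite_in_span[OF finite_set B1_cols_carrier] span_B1_cols by auto
  define k where "k = vec 10 (\<lambda>i. if i < 8 then - a (B1_cols \<beta> ! i) else if i = t then 1 else 0)"
  have "M3 \<beta> *\<^sub>v k = 0\<^sub>v 10"
  proof (rule eq_vecI)
    fix r assume "r < dim_vec (0\<^sub>v 10 :: real vec)"
    then have r: "r < 10" by simp
    have "(M3 \<beta> *\<^sub>v k) $ r = - (\<Sum>i<8. M3 \<beta> $$ (r,i) * a (B1_cols \<beta> ! i)) + M3 \<beta> $$ (r,t)"
      using mult_mat_vec_nth_sum[OF moment_mat_carrier _ r, of k] t
      by (auto simp: k_def sum_lessThan_10 sum_negf)
    also have "\<dots> = 0"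
      using lincomb_B1_cols_nth[OF r, of a] a r t by (auto simp: moment_mat_def)
    finally show "(M3 \<beta> *\<^sub>v k) $ r = 0\<^sub>v 10 $ r" using r by simp
  qed simp
  then show ?thesis using t by (intro bexI[of _ k]) (auto simp: k_def)
qed

text \<open>\<open>tail_kernel 8\<close> and \<open>tail_kernel 9\<close> are the column relations of \<open>M(3)\<close> expressing \<open>XY\<^sup>2\<close>
  and \<open>Y\<^sup>3\<close> in the basis \<open>\<B>\<^sub>1\<close>.\<close>
definition tail_kernel :: "nat \<Rightarrow> real vec" where
  "tail_kernel t = (SOME k. k \<in> carrier_vec 10 \<and> M3 \<beta> *\<^sub>v k = 0\<^sub>v 10 \<and>
     (\<forall>s\<in>{8,9}. k $ s = (if s = t then 1 else 0)))"

lemma tail_kernel: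
  assumes "t \<in> {8,9}"
  shows "tail_kernel t \<in> carrier_vec 10" "M3 \<beta> *\<^sub>v tail_kernel t = 0\<^sub>v 10"
    "tail_kernel t $ 8 = (if t = 8 then 1 else 0)" "tail_kernel t $ 9 = (if t = 9 then 1 else 0)"
proof -
  have "tail_kernel t \<in> carrier_vec 10 \<and> M3 \<beta> *\<^sub>v tail_kernel t = 0\<^sub>v 10 \<and>
      (\<forall>s\<in>{8,9}. tail_kernel t $ s = (if s = t then 1 else 0))"
    unfolding tail_kernel_def by (rule someI_ex[OF kernel_vec_with_tail[OF assms, unfolded Bex_def]])
  then show "tail_kernel t \<in> carrier_vec 10" "M3 \<beta> *\<^sub>v tail_kernel t = 0\<^sub>v 10"
    "tail_kernel t $ 8 = (if t = 8 then 1 else 0)" "tail_kernel t $ 9 = (if t = 9 then 1 else 0)"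
    by auto
qed

lemmas tail_kernel_8 = tail_kernel[of 8, simplified]
lemmas tail_kernel_9 = tail_kernel[of 9, simplified]

lemma kernel_vec_decomp:
  assumes a: "a \<in> carrier_vec 10" "M3 \<beta> *\<^sub>v a = 0\<^sub>v 10"
  shows "peval a x y = a $ 8 * peval (tail_kernel 8) x y + a $ 9 * peval (tail_kernel 9) x y"
proof -
  let ?k8 = "tail_kernel 8" and ?k9 = "tail_kernel 9"
  define d where "d = vec 10 (\<lambda>r. a $ r - a $ 8 * ?k8 $ r - a $ 9 * ?k9 $ r)"
  have d: "d \<in> carrier_vec 10" by (simp add: d_def)
  have "M3 \<beta> *\<^sub>v d = 0\<^sub>v 10"
  proof (rule eq_vecI)
    fix s assume "s < dim_vec (0\<^sub>v 10 :: real vec)"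
    then have s: "s < 10" by simp
    have "(M3 \<beta> *\<^sub>v d) $ s = (M3 \<beta> *\<^sub>v a) $ s - a $ 8 * (M3 \<beta> *\<^sub>v ?k8) $ s - a $ 9 * (M3 \<beta> *\<^sub>v ?k9) $ s"
      unfolding mult_mat_vec_nth_sum[OF moment_mat_carrier d s] mult_mat_vec_nth_sum[OF moment_mat_carrier a(1) s]
        mult_mat_vec_nth_sum[OF moment_mat_carrier tail_kernel_8(1) s]
        mult_mat_vec_nth_sum[OF moment_mat_carrier tail_kernel_9(1) s]
        sum_distrib_left sum_subtractf[symmetric]
      by (intro sum.cong) (auto simp: d_def algebra_simps)
    then show "(M3 \<beta> *\<^sub>v d) $ s = 0\<^sub>v 10 $ s"
      using a(2) tail_kernel_8(2) tail_kernel_9(2) s by simp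
  qed simp
  then have "d = 0\<^sub>v 10"
    by (rule kernel_vec_eq_0_if_tail_0[OF d]) (simp_all add: d_def tail_kernel_8 tail_kernel_9)
  have coeff: "a $ r = a $ 8 * ?k8 $ r + a $ 9 * ?k9 $ r" if "r < 10" for r
  proof -
    have "d $ r = 0" using \<open>d = 0\<^sub>v 10\<close> that by simp
    then show ?thesis using that by (simp add: d_def)
  qed
  have "peval a x y = (\<Sum>r<10. (a $ 8 * ?k8 $ r + a $ 9 * ?k9 $ r) * x ^ fst (mons!r) * y ^ snd (mons!r))"
    unfolding peval_def
  proof (intro sum.cong refl)
    fix r assume "r \<in> {..<10::nat}"
    then show "a $ r * x ^ fst (mons!r) * y ^ snd (mons!r) =
        (a $ 8 * ?k8 $ r + a $ 9 * ?k9 $ r) * x ^ fst (mons!r) * y ^ snd (mons!r)"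
      using coeff[of r] by simp
  qed
  then show ?thesis
    unfolding peval_def by (simp add: distrib_right sum.distrib sum_distrib_left mult.assoc)
qed

lemma variety_iff_tail_kernels:
  "(x,y) \<in> variety \<beta> \<longleftrightarrow> peval (tail_kernel 8) x y = 0 \<and> peval (tail_kernel 9) x y = 0"
proof
  assume "(x,y) \<in> variety \<beta>"
  then show "peval (tail_kernel 8) x y = 0 \<and> peval (tail_kernel 9) x y = 0"
    using tail_kernel_8(1,2) tail_kernel_9(1,2) unfolding variety_def by blast
next
  assume zero: "peval (tail_kernel 8) x y = 0 \<and> peval (tail_kernel 9) x y = 0"
  show "(x,y) \<in> variety \<beta>"
    unfolding variety_def
  proof (clarify)
    fix a assume "a \<in> carrier_vec 10" "M3 \<beta> *\<^sub>v a = 0\<^sub>v 10"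
    then show "peval a x y = 0" using kernel_vec_decomp[of a x y] zero by simp
  qed
qed

lemma represents_AE_variety:
  assumes "represents \<mu> \<beta>"
  shows "AE p in \<mu>. p \<in> variety \<beta>"
proof -
  have "AE p in \<mu>. peval (tail_kernel 8) (fst p) (snd p) = 0"
    by (rule represents_AE_kernel[OF assms tail_kernel_8(1,2)])
  moreover have "AE p in \<mu>. peval (tail_kernel 9) (fst p) (snd p) = 0"
    by (rule represents_AE_kernel[OF assms tail_kernel_9(1,2)])
  ultimately show ?thesis
  proof eventually_elim
    case (elim p)
    then show ?case using variety_iff_tail_kernels[of "fst p" "snd p"] by simp
  qed
qed

end

section \<open>The Vandermonde matrix of the variety\<close>

lemma W_B1_carrier: "W_B1 pts \<in> carrier_mat 8 8"
  by (simp add: W_B1_def)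

lemma W_B1_mult_vec_nth:
  assumes "c \<in> carrier_vec 8" "l < 8"
  shows "(W_B1 pts *\<^sub>v c) $ l =
    (\<Sum>k<8. c $ k * fst (pts!l) ^ fst (mons!k) * snd (pts!l) ^ snd (mons!k))"
  using mult_mat_vec_nth_sum[OF W_B1_carrier assms] assms(2)
  by (auto intro!: sum.cong simp: W_B1_def vandermonde_def ac_simps)

definition B1_poly :: "real vec \<Rightarrow> real vec" where
  "B1_poly c = vec 10 (\<lambda>k. if k < 8 then c $ k else 0)"

lemma B1_poly_carrier: "B1_poly c \<in> carrier_vec 10"
  by (simp add: B1_poly_def)

lemma peval_B1_poly: "peval (B1_poly c) x y = (\<Sum>k<8. c $ k * x ^ fst (mons!k) * y ^ snd (mons!k))"
  unfolding peval_def sum_lessThan_10 by (simp add: B1_poly_def)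

text \<open>\<open>interp_coeffs pts 4 0\<close> and \<open>interp_coeffs pts 3 1\<close> are the vectors \<open>a\<close> and \<open>b\<close> of
  the theorem.\<close>
definition interp_coeffs :: "(real \<times> real) list \<Rightarrow> nat \<Rightarrow> nat \<Rightarrow> real vec" where
  "interp_coeffs pts s t = the (mat_inverse (W_B1 pts)) *\<^sub>v vec 8 (\<lambda>l. fst (pts!l) ^ s * snd (pts!l) ^ t)"

locale B1_variety = B1_basis +
  fixes pts :: "(real \<times> real) list"
  assumes distinct_pts: "distinct pts" and set_pts: "set pts = variety \<beta>" and length_pts: "length pts = 8"
begin

lemma W_B1_injective:
  assumes wc: "weakly_consistent \<beta>" and c: "c \<in> carrier_vec 8" "W_B1 pts *\<^sub>v c = 0\<^sub>v 8"
  shows "c = 0\<^sub>v 8"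
proof -
  have "\<forall>(x,y) \<in> variety \<beta>. peval (B1_poly c) x y = 0"
  proof clarify
    fix x y assume "(x,y) \<in> variety \<beta>"
    then obtain l where l: "l < 8" "pts!l = (x,y)" using set_pts length_pts by (metis in_set_conv_nth)
    have "peval (B1_poly c) x y = (W_B1 pts *\<^sub>v c) $ l"
      using l by (simp add: peval_B1_poly W_B1_mult_vec_nth[OF c(1) l(1)])
    then show "peval (B1_poly c) x y = 0" using c(2) l(1) by simp
  qed
  then have "M3 \<beta> *\<^sub>v B1_poly c = 0\<^sub>v 10"
    using wc B1_poly_carrier unfolding weakly_consistent_def by blast
  then have "B1_poly c = 0\<^sub>v 10"
    by (rule kernel_vec_eq_0_if_tail_0[OF B1_poly_carrier]) (simp_all add: B1_poly_def)
  have "c $ k = 0" if "k < 8" for k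
  proof -
    have "B1_poly c $ k = 0" using \<open>B1_poly c = 0\<^sub>v 10\<close> that by simp
    then show ?thesis using that by (simp add: B1_poly_def)
  qed
  then show ?thesis using c(1) by (intro eq_vecI) auto
qed

lemma W_B1_inverse:
  assumes "weakly_consistent \<beta>"
  obtains B where "mat_inverse (W_B1 pts) = Some B" "W_B1 pts * B = 1\<^sub>m 8" "B * W_B1 pts = 1\<^sub>m 8"
    "B \<in> carrier_mat 8 8"
  using mat_inverse_if_injective[OF W_B1_carrier W_B1_injective[OF assms]] by blast

lemma W_B1_mult_inverse:
  assumes wc: "weakly_consistent \<beta>" and v: "v \<in> carrier_vec 8"
  shows "W_B1 pts *\<^sub>v (the (mat_inverse (W_B1 pts)) *\<^sub>v v) = v"
    and "the (mat_inverse (W_B1 pts)) *\<^sub>v v \<in> carrier_vec 8"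
proof -
  obtain B where B: "mat_inverse (W_B1 pts) = Some B" "W_B1 pts * B = 1\<^sub>m 8" "B \<in> carrier_mat 8 8"
    using W_B1_inverse[OF wc] by blast
  have "W_B1 pts *\<^sub>v (B *\<^sub>v v) = (W_B1 pts * B) *\<^sub>v v"
    by (rule assoc_mult_mat_vec[symmetric, OF W_B1_carrier[of pts] B(3) v])
  then show "W_B1 pts *\<^sub>v (the (mat_inverse (W_B1 pts)) *\<^sub>v v) = v" using B v by simp
  show "the (mat_inverse (W_B1 pts)) *\<^sub>v v \<in> carrier_vec 8"
    using mult_mat_vec_carrier[OF B(3) v] B(1) by simp
qed

lemma interp_coeffs_interpolate:
  assumes wc: "weakly_consistent \<beta>" and l: "l < 8"
  shows "(\<Sum>k<8. interp_coeffs pts s t $ k * fst (pts!l) ^ fst (mons!k) * snd (pts!l) ^ snd (mons!k)) =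
    fst (pts!l) ^ s * snd (pts!l) ^ t"
proof -
  let ?v = "vec 8 (\<lambda>l. fst (pts!l) ^ s * snd (pts!l) ^ t)"
  have "(W_B1 pts *\<^sub>v interp_coeffs pts s t) $ l = fst (pts!l) ^ s * snd (pts!l) ^ t"
    unfolding interp_coeffs_def W_B1_mult_inverse(1)[OF wc, of ?v, simplified] using l by simp
  then show ?thesis
    using W_B1_mult_vec_nth[OF W_B1_mult_inverse(2)[OF wc, of ?v, simplified] l, where pts = pts]
    by (simp add: interp_coeffs_def)
qed

lemma lagrange_B1_poly:
  assumes wc: "weakly_consistent \<beta>" and l: "l < 8"
  shows "\<exists>a \<in> carrier_vec 10. \<forall>m<8. peval a (fst (pts!m)) (snd (pts!m)) = (if m = l then 1 else 0)"
proof (intro bexI allI impI)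
  let ?c = "the (mat_inverse (W_B1 pts)) *\<^sub>v unit_vec 8 l"
  show "B1_poly ?c \<in> carrier_vec 10" by (rule B1_poly_carrier)
  fix m :: nat assume m: "m < 8"
  have "peval (B1_poly ?c) (fst (pts!m)) (snd (pts!m)) = (W_B1 pts *\<^sub>v ?c) $ m"
    using W_B1_mult_vec_nth[OF W_B1_mult_inverse(2)[OF wc] m, where pts = pts] by (simp add: peval_B1_poly)
  also have "\<dots> = (if m = l then 1 else 0)"
    using W_B1_mult_inverse(1)[OF wc] m l by simp
  finally show "peval (B1_poly ?c) (fst (pts!m)) (snd (pts!m)) = (if m = l then 1 else 0)" .
qed

lemma B1_weights_exist:
  assumes wc: "weakly_consistent \<beta>"
  obtains \<rho> where "\<And>k::nat. k < 8 \<Longrightarrow>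
    atomic_seq pts \<rho> (fst (mons!k)) (snd (mons!k)) = \<beta> (fst (mons!k)) (snd (mons!k))"
proof -
  obtain B where B: "B * W_B1 pts = 1\<^sub>m 8" "B \<in> carrier_mat 8 8" using W_B1_inverse[OF wc] by blast
  define b where "b = vec 8 (\<lambda>k. \<beta> (fst (mons!k)) (snd (mons!k)))"
  define \<rho> where "\<rho> = transpose_mat B *\<^sub>v b"
  have Wt: "transpose_mat (W_B1 pts) \<in> carrier_mat 8 8" using W_B1_carrier[of pts] by simp
  have "transpose_mat (W_B1 pts) *\<^sub>v \<rho> = (transpose_mat (W_B1 pts) * transpose_mat B) *\<^sub>v b"
    unfolding \<rho>_def using Wt B(2) by (intro assoc_mult_mat_vec[symmetric]) (auto simp: b_def)
  also have "transpose_mat (W_B1 pts) * transpose_mat B = 1\<^sub>m 8"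
    using transpose_mult[OF B(2) W_B1_carrier[of pts]] B(1) by simp
  finally have Wt_\<rho>: "transpose_mat (W_B1 pts) *\<^sub>v \<rho> = b" by (simp add: b_def)
  have \<rho>_carrier: "\<rho> \<in> carrier_vec 8" unfolding \<rho>_def using B(2) by (simp add: b_def)
  show ?thesis
  proof (rule that)
    fix k :: nat assume k: "k < 8"
    have "atomic_seq pts (\<lambda>l. \<rho> $ l) (fst (mons!k)) (snd (mons!k)) =
        (\<Sum>l<8. transpose_mat (W_B1 pts) $$ (k,l) * \<rho> $ l)"
      unfolding atomic_seq_def length_pts using k
      by (intro sum.cong refl) (simp add: W_B1_def vandermonde_def ac_simps)
    also have "\<dots> = (transpose_mat (W_B1 pts) *\<^sub>v \<rho>) $ k"
      by (rule mult_mat_vec_nth_sum[OF Wt \<rho>_carrier k, symmetric])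
    finally show "atomic_seq pts (\<lambda>l. \<rho> $ l) (fst (mons!k)) (snd (mons!k)) = \<beta> (fst (mons!k)) (snd (mons!k))"
      using k by (simp add: Wt_\<rho> b_def)
  qed
qed

definition gen_coeffs :: "nat \<times> nat \<Rightarrow> nat \<Rightarrow> real" where
  "gen_coeffs g k = (if g = (1,2) then - tail_kernel 8 $ k else if g = (0,3) then - tail_kernel 9 $ k
     else interp_coeffs pts (fst g) (snd g) $ k)"

lemma kernel_generator_recursion:
  assumes t: "t \<in> {8,9}"
    and ker: "(\<Sum>r<10. tail_kernel t $ r * m (fst (mons!r) + i) (snd (mons!r) + j)) = 0"
  shows "m (fst (mons!t) + i) (snd (mons!t) + j) =
    (\<Sum>k<8. gen_coeffs (mons!t) k * m (fst (mons!k) + i) (snd (mons!k) + j))"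
proof -
  from t consider "t = 8" | "t = 9" by blast
  then show ?thesis
    using tail_relation[OF t tail_kernel(3,4)[OF t] ker] by cases (simp_all add: gen_coeffs_def)
qed

lemma B1_recursive_gen_coeffs_iff:
  assumes ker: "\<And>t i j. t \<in> {8,9} \<Longrightarrow> i + j \<le> 3 \<Longrightarrow>
    (\<Sum>r<10. tail_kernel t $ r * m (fst (mons!r) + i) (snd (mons!r) + j)) = 0"
  shows "B1_recursive m gen_coeffs \<longleftrightarrow> (\<forall>(s,t) \<in> {(4,0),(3,1)}. \<forall>i j. i + j \<le> 2 \<longrightarrow>
    m (s + i) (t + j) = (\<Sum>k<8. interp_coeffs pts s t $ k * m (fst (mons!k) + i) (snd (mons!k) + j)))"
    (is "_ \<longleftrightarrow> ?interp")
proof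
  assume rec: "B1_recursive m gen_coeffs"
  show ?interp
  proof clarify
    fix s t i j :: nat assume st: "(s,t) \<in> {(4,0),(3,1)}" "i + j \<le> 2"
    then have "(s,t) \<in> B1_generators" "s + t + i + j \<le> 6" by (auto simp: B1_generators_def)
    moreover have "gen_coeffs (s,t) k = interp_coeffs pts s t $ k" for k
      using st(1) by (auto simp: gen_coeffs_def)
    ultimately show "m (s + i) (t + j) =
        (\<Sum>k<8. interp_coeffs pts s t $ k * m (fst (mons!k) + i) (snd (mons!k) + j))"
      using rec[unfolded B1_recursive_def, rule_format, of s t i j] by simp
  qed
next
  assume interp: ?interp
  show "B1_recursive m gen_coeffs"
    unfolding B1_recursive_def
  proof (intro allI impI)
    fix s t i j assume st: "(s,t) \<in> B1_generators" "s + t + i + j \<le> 6"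
    then consider (interp_gen) "(s,t) \<in> {(4,0),(3,1)}" "i + j \<le> 2"
      | (xy2) "s = 1" "t = 2" "i + j \<le> 3" | (y3) "s = 0" "t = 3" "i + j \<le> 3"
      by (auto simp: B1_generators_def)
    then show "m (s + i) (t + j) = (\<Sum>k<8. gen_coeffs (s,t) k * m (fst (mons!k) + i) (snd (mons!k) + j))"
    proof cases
      case interp_gen
      then have "gen_coeffs (s,t) k = interp_coeffs pts s t $ k" for k by (auto simp: gen_coeffs_def)
      then show ?thesis using interp interp_gen by auto
    next
      case xy2
      then show ?thesis using kernel_generator_recursion[of 8 m i j] ker[of 8 i j] by simp
    next
      case y3
      then show ?thesis using kernel_generator_recursion[of 9 m i j] ker[of 9 i j] by simp
    qed
  qed
qed

lemma atomic_seq_kernel_relation: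
  assumes a: "a \<in> carrier_vec 10" "M3 \<beta> *\<^sub>v a = 0\<^sub>v 10"
  shows "(\<Sum>r<10. a $ r * atomic_seq pts \<rho> (fst (mons!r) + i) (snd (mons!r) + j)) = 0"
proof -
  have "peval a (fst (pts!l)) (snd (pts!l)) = 0" if "l < length pts" for l
  proof -
    have "pts!l \<in> variety \<beta>" using set_pts nth_mem[OF that] by blast
    then show ?thesis using a unfolding variety_def by (cases "pts!l") auto
  qed
  then show ?thesis unfolding sum_atomic_seq_shift peval_def[symmetric] by simp
qed

lemma atomic_seq_B1_recursive:
  assumes wc: "weakly_consistent \<beta>"
  shows "B1_recursive (atomic_seq pts \<rho>) gen_coeffs"
proof (subst B1_recursive_gen_coeffs_iff)
  show "(\<Sum>r<10. tail_kernel t $ r * atomic_seq pts \<rho> (fst (mons!r) + i) (snd (mons!r) + j)) = 0"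
    if "t \<in> {8,9}" "i + j \<le> 3" for t i j
    by (rule atomic_seq_kernel_relation[OF tail_kernel(1,2)[OF that(1)]])
  have "atomic_seq pts \<rho> (s + i) (t + j) =
      (\<Sum>k<8. interp_coeffs pts s t $ k * atomic_seq pts \<rho> (fst (mons!k) + i) (snd (mons!k) + j))"
    for s t i j
  proof -
    let ?x = "\<lambda>l. fst (pts!l)" and ?y = "\<lambda>l. snd (pts!l)"
    have "(\<Sum>k<8. interp_coeffs pts s t $ k * atomic_seq pts \<rho> (fst (mons!k) + i) (snd (mons!k) + j)) =
        (\<Sum>l<length pts. \<rho> l * ?x l ^ i * ?y l ^ j *
          (\<Sum>k<8. interp_coeffs pts s t $ k * ?x l ^ fst (mons!k) * ?y l ^ snd (mons!k)))"
      by (rule sum_atomic_seq_shift)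
    also have "\<dots> = (\<Sum>l<length pts. \<rho> l * ?x l ^ i * ?y l ^ j * (?x l ^ s * ?y l ^ t))"
      using interp_coeffs_interpolate[OF wc] length_pts by simp
    also have "\<dots> = atomic_seq pts \<rho> (s + i) (t + j)"
      unfolding atomic_seq_def by (simp add: power_add ac_simps)
    finally show ?thesis by simp
  qed
  then show "\<forall>(s,t) \<in> {(4,0),(3,1)}. \<forall>i j. i + j \<le> 2 \<longrightarrow> atomic_seq pts \<rho> (s + i) (t + j) =
      (\<Sum>k<8. interp_coeffs pts s t $ k * atomic_seq pts \<rho> (fst (mons!k) + i) (snd (mons!k) + j))"
    by blast
qed

lemma beta_B1_recursive_iff:
  "B1_recursive \<beta> gen_coeffs \<longleftrightarrow> (\<forall>(s,t) \<in> {(4,0),(3,1)}. \<forall>i j. i + j \<le> 2 \<longrightarrow>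
    \<beta> (s + i) (t + j) = (\<Sum>k<8. interp_coeffs pts s t $ k * \<beta> (fst (mons!k) + i) (snd (mons!k) + j)))"
proof (rule B1_recursive_gen_coeffs_iff)
  fix t i j :: nat assume t: "t \<in> {8,9}" and ij: "i + j \<le> 3"
  show "(\<Sum>r<10. tail_kernel t $ r * \<beta> (fst (mons!r) + i) (snd (mons!r) + j)) = 0"
    by (rule kernel_shift_relation[OF tail_kernel(1,2)[OF t] ij])
qed

lemma atomic_moments_B1_recursive:
  assumes wc: "weakly_consistent \<beta>" and at: "atomic_moments \<beta> pts \<rho>"
  shows "B1_recursive \<beta> gen_coeffs"
proof (rule B1_recursive_if_eq_low_degree[OF _ atomic_seq_B1_recursive[OF wc]])
  show "\<beta> u v = atomic_seq pts \<rho> u v" if "u + v \<le> 6" for u v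
    using at that unfolding atomic_moments_def by blast
qed

lemma has_rep_measure_imp_atomic:
  assumes "has_rep_measure \<beta>"
  obtains \<rho> where "atomic_moments \<beta> pts \<rho>"
proof -
  obtain \<mu> where rep: "represents \<mu> \<beta>" using assms has_rep_measure_iff_represents by blast
  have "AE p in \<mu>. p \<in> set pts" using represents_AE_variety[OF rep] set_pts by simp
  then show ?thesis using that represents_atomic_if_AE_points[OF rep _ distinct_pts] by blast
qed

lemma has_rep_measure_if_B1_recursive:
  assumes psd: "psd_mat 10 (M3 \<beta>)" and wc: "weakly_consistent \<beta>" and rec: "B1_recursive \<beta> gen_coeffs"
  shows "has_rep_measure \<beta>"
proof -
  obtain \<rho> where \<rho>: "\<And>k. k < 8 \<Longrightarrow>
      atomic_seq pts \<rho> (fst (mons!k)) (snd (mons!k)) = \<beta> (fst (mons!k)) (snd (mons!k))"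
    using B1_weights_exist[OF wc] by blast
  have defect: "B1_recursive (\<lambda>u v. \<beta> u v - atomic_seq pts \<rho> u v) gen_coeffs"
    by (rule B1_recursive_diff[OF rec atomic_seq_B1_recursive[OF wc]])
  have "\<beta> u v - atomic_seq pts \<rho> u v = 0" if "u + v \<le> 6" for u v
    using B1_recursive_vanishing[OF defect _ that] \<rho> by simp
  then have at: "atomic_moments \<beta> pts \<rho>" unfolding atomic_moments_def by simp
  have "\<rho> l \<ge> 0" if l: "l < length pts" for l
  proof -
    have "l < 8" using l length_pts by simp
    then obtain a where a: "a \<in> carrier_vec 10"
      "\<forall>m<8. peval a (fst (pts!m)) (snd (pts!m)) = (if m = l then 1 else 0)"
      using lagrange_B1_poly[OF wc] by blast
    show ?thesis by (rule atomic_weight_nonneg[OF psd at a(1) l]) (simp add: a(2) length_pts)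
  qed
  then show ?thesis by (rule has_rep_measure_if_atomic[OF distinct_pts _ at])
qed

lemma has_rep_measure_iff_B1_recursive:
  assumes "psd_mat 10 (M3 \<beta>)"
  shows "has_rep_measure \<beta> \<longleftrightarrow> weakly_consistent \<beta> \<and> B1_recursive \<beta> gen_coeffs"
proof
  assume "has_rep_measure \<beta>"
  then obtain \<rho> where at: "atomic_moments \<beta> pts \<rho>" by (rule has_rep_measure_imp_atomic)
  then have wc: "weakly_consistent \<beta>" using atomic_moments_weakly_consistent[OF at] set_pts by simp
  then show "weakly_consistent \<beta> \<and> B1_recursive \<beta> gen_coeffs"
    using atomic_moments_B1_recursive[OF wc at] by blast
next
  assume "weakly_consistent \<beta> \<and> B1_recursive \<beta> gen_coeffs"
  then show "has_rep_measure \<beta>" using has_rep_measure_if_B1_recursive[OF assms] by blast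
qed

end

theorem theorem5p1:
  fixes \<beta> :: "nat \<Rightarrow> nat \<Rightarrow> real" and pts :: "(real \<times> real) list"
  assumes "psd_mat 10 (M3 \<beta>)"
    and "pd_mat 6 (M2 \<beta>)"
    and "vec_space.rank 10 (M3 \<beta>) = 8"
    and "card (variety \<beta>) = 8"
    and "distinct pts" and "set pts = variety \<beta>"
    and "distinct (map (col (M3 \<beta>)) [0..<8])"
    and "module.lin_indpt class_ring (module_vec TYPE(real) 10) (set (map (col (M3 \<beta>)) [0..<8]))"
    and "module.span class_ring (module_vec TYPE(real) 10) (set (map (col (M3 \<beta>)) [0..<8]))
           = vec_space.col_space 10 (M3 \<beta>)"
  shows "has_rep_measure \<beta> \<longleftrightarrow>
    (weakly_consistent \<beta> \<and>
     (let a = the (mat_inverse (W_B1 pts)) *\<^sub>v Matrix.vec 8 (\<lambda>k. fst (pts!k) ^ 4);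
          b = the (mat_inverse (W_B1 pts)) *\<^sub>v Matrix.vec 8 (\<lambda>k. fst (pts!k) ^ 3 * snd (pts!k))
      in \<forall>i j. i + j \<le> 2 \<longrightarrow>
           riesz \<beta> (mono_times i j (resid_poly (4,0) a)) = 0 \<and>
           riesz \<beta> (mono_times i j (resid_poly (3,1) b)) = 0))"
proof -
  have "length pts = 8" using distinct_card[OF assms(5)] assms(4,6) by simp
  then interpret B1_variety \<beta> pts
    using assms(5-9) by unfold_locales (simp_all add: B1_cols_def)
  have riesz_zero_iff: "riesz \<beta> (mono_times i j (resid_poly (s,t) (interp_coeffs pts s t))) = 0 \<longleftrightarrow>
      \<beta> (s + i) (t + j) = (\<Sum>k<8. interp_coeffs pts s t $ k * \<beta> (fst (mons!k) + i) (snd (mons!k) + j))"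
    if "s + t = 4" "i + j \<le> 2" for s t i j
    using that by (simp add: riesz_mono_times_resid)
  have "has_rep_measure \<beta> \<longleftrightarrow> weakly_consistent \<beta> \<and>
      (\<forall>i j. i + j \<le> 2 \<longrightarrow>
        riesz \<beta> (mono_times i j (resid_poly (4,0) (interp_coeffs pts 4 0))) = 0 \<and>
        riesz \<beta> (mono_times i j (resid_poly (3,1) (interp_coeffs pts 3 1))) = 0)"
    unfolding has_rep_measure_iff_B1_recursive[OF assms(1)] beta_B1_recursive_iff
    using riesz_zero_iff[of 4 0] riesz_zero_iff[of 3 1] by auto
  then show ?thesis by (simp add: interp_coeffs_def Let_def)
qed

end
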